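(* Let $\mathcal V,\mathcal W$ be operator spaces, let $\mathcal D\subseteq\mathcal V_{\rm nc}$ be a finitely open noncommutative set and $\mathcal E\subseteq\mathcal W_{\rm nc}$ a noncommutative set, and let $f\colon\mathcal D\to\mathcal E$ be a locally bounded noncommutative function. Then $\delta_{\mathcal E}(f(a),f(c))(\Delta f(a,c)(b))\le\delta_{\mathcal D}(a,c)(b)$ for all $m,n\in\mathbb N$, $a\in\mathcal D_n$, $c\in\mathcal D_m$, $b\in\mathcal V^{n\times m}$.
   Context: A noncommutative set is a family $\mathcal D=(\mathcal D_n)$, $\mathcal D_n\subseteq\mathcal V^{n\times n}$, closed under direct sums $a\oplus c=\begin{bmatrix}a&0\\0&c\end{bmatrix}$. It is finitely open if for each $n$ the intersection of $\mathcal D_n$ with any finite-dimensional subspace of $\mathcal V^{n\times n}$ is open in that subspace. A noncommutative function $f\colon\mathcal D\to\mathcal E$ maps $\mathcal D_n$ into $\mathcal E_n$ and respects intertwinings by scalar matrices: $aS=Sb\Rightarrow f(a)S=Sf(b)$ for $a\in\mathcal D_m,b\in\mathcal D_n,S\in\mathbb C^{m\times n}$. $\Delta f(a,c)\colon\mathcal V^{n\times m}\to\mathcal W^{n\times m}$ denotes the (linear) difference-differential of $f$, determined by $f\Big(\begin{bmatrix}a&b\\0&c\end{bmatrix}\Big)=\begin{bmatrix}f(a)&\Delta f(a,c)(b)\\0&f(c)\end{bmatrix}$ whenever the block matrix lies in $\mathcal D_{n+m}$. For $a\in\mathcal D_n,c\in\mathcal D_m,b\in\mathcal V^{n\times m}$,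 $\delta_{\mathcal D}(a,c)(b)=\big[\sup\{t\in[0,+\infty]\colon\begin{bmatrix}a&sb\\0&c\end{bmatrix}\in\mathcal D_{n+m}\ \forall s\in[0,t]\}\big]^{-1}\in[0,+\infty]$ ($1/0=+\infty$, $1/\infty=0$); similarly for $\mathcal E$. *)

theory Defs
  imports "HOL-Analysis.Analysis" "HOL-Library.Extended_Nonnegative_Real"
begin

class complex_normed_space = real_normed_vector +
  fixes scaleC :: "complex \<Rightarrow> 'a \<Rightarrow> 'a"
  assumes scaleC_add_right: "scaleC c (x + y) = scaleC c x + scaleC c y"
    and scaleC_add_left: "scaleC (c + d) x = scaleC c x + scaleC d x"
    and scaleC_mult: "scaleC (c * d) x = scaleC c (scaleC d x)"
    and scaleC_one: "scaleC 1 x = x"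
    and scaleC_of_real: "scaleC (of_real r) x = scaleR r x"
    and norm_scaleC: "norm (scaleC c x) = cmod c * norm x"

section \<open>Matrices over a space, represented as zero-padded functions\<close>

type_synonym 'v mtx = "nat \<Rightarrow> nat \<Rightarrow> 'v"

definition mats :: "nat \<Rightarrow> nat \<Rightarrow> ('v::zero) mtx set" where
  "mats n m = {a. \<forall>i j. (n \<le> i \<or> m \<le> j) \<longrightarrow> a i j = 0}"

definition mzero :: "('v::zero) mtx" where
  "mzero = (\<lambda>i j. 0)"

definition madd :: "('v::plus) mtx \<Rightarrow> 'v mtx \<Rightarrow> 'v mtx" where
  "madd x y = (\<lambda>i j. x i j + y i j)"

definition mdiff :: "('v::minus) mtx \<Rightarrow> 'v mtx \<Rightarrow> 'v mtx" where
  "mdiff x y = (\<lambda>i j. x i j - y i j)"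

definition mscale :: "complex \<Rightarrow> ('v::complex_normed_space) mtx \<Rightarrow> 'v mtx" where
  "mscale z x = (\<lambda>i j. scaleC z (x i j))"

text \<open>Block upper triangular matrix [a b; 0 c] with a of size n x n.\<close>
definition blk :: "nat \<Rightarrow> ('v::zero) mtx \<Rightarrow> 'v mtx \<Rightarrow> 'v mtx \<Rightarrow> 'v mtx" where
  "blk n a b c = (\<lambda>i j. if i < n then (if j < n then a i j else b i (j - n))
                        else (if j < n then 0 else c (i - n) (j - n)))"

definition dsum :: "nat \<Rightarrow> ('v::zero) mtx \<Rightarrow> 'v mtx \<Rightarrow> 'v mtx" where
  "dsum n a c = blk n a mzero c"

definition lmul :: "nat \<Rightarrow> complex mtx \<Rightarrow> ('v::complex_normed_space) mtx \<Rightarrow> 'v mtx" where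
  "lmul k S x = (\<lambda>i j. \<Sum>l<k. scaleC (S i l) (x l j))"

definition rmul :: "nat \<Rightarrow> ('v::complex_normed_space) mtx \<Rightarrow> complex mtx \<Rightarrow> 'v mtx" where
  "rmul k x S = (\<lambda>i j. \<Sum>l<k. scaleC (S l j) (x i l))"

text \<open>Operator norm of a scalar n x m matrix acting from l2^m to l2^n.\<close>
definition cmatnorm :: "nat \<Rightarrow> nat \<Rightarrow> complex mtx \<Rightarrow> real" where
  "cmatnorm n m \<alpha> = Sup {sqrt (\<Sum>i<n. (cmod (\<Sum>j<m. \<alpha> i j * x j))\<^sup>2) | x.
                          (\<Sum>j<m. (cmod (x j))\<^sup>2) \<le> 1}"

section \<open>Operator spaces (abstract, Ruan's axioms)\<close>

text \<open>N n is the norm on M_n(V) (n \<ge> 1).\<close>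
definition opspace :: "(nat \<Rightarrow> ('v::complex_normed_space) mtx \<Rightarrow> real) \<Rightarrow> bool" where
  "opspace N \<longleftrightarrow>
     (\<forall>x::'v. N 1 (\<lambda>i j. if i = 0 \<and> j = 0 then x else 0) = norm x) \<and>
     (\<forall>n>0. \<forall>x\<in>mats n n. 0 \<le> N n x \<and> (N n x = 0 \<longleftrightarrow> x = mzero)) \<and>
     (\<forall>n>0. \<forall>x\<in>mats n n. \<forall>y\<in>mats n n. N n (madd x y) \<le> N n x + N n y) \<and>
     (\<forall>n>0. \<forall>z. \<forall>x\<in>mats n n. N n (mscale z x) = cmod z * N n x) \<and>
     (\<forall>n m. 0 < n \<longrightarrow> 0 < m \<longrightarrow> (\<forall>x\<in>mats n n. \<forall>y\<in>mats m m.
         N (n + m) (dsum n x y) = max (N n x) (N m y))) \<and>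
     (\<forall>n m. 0 < n \<longrightarrow> 0 < m \<longrightarrow> (\<forall>\<alpha>\<in>mats n m. \<forall>\<beta>\<in>mats m n. \<forall>x\<in>mats m m.
         N n (lmul m \<alpha> (rmul m x \<beta>)) \<le> cmatnorm n m \<alpha> * N m x * cmatnorm m n \<beta>))"

definition nc_set :: "(nat \<Rightarrow> ('v::zero) mtx set) \<Rightarrow> bool" where
  "nc_set D \<longleftrightarrow> (\<forall>n>0. D n \<subseteq> mats n n) \<and>
     (\<forall>n m a c. 0 < n \<longrightarrow> 0 < m \<longrightarrow> a \<in> D n \<longrightarrow> c \<in> D m \<longrightarrow> dsum n a c \<in> D (n + m))"

definition fspan :: "nat \<Rightarrow> (nat \<Rightarrow> ('v::complex_normed_space) mtx) \<Rightarrow> 'v mtx set" where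
  "fspan k v = {x. \<exists>z::nat \<Rightarrow> complex. x = (\<lambda>i j. \<Sum>l<k. scaleC (z l) (v l i j))}"

definition finitely_open ::
  "(nat \<Rightarrow> ('v::complex_normed_space) mtx \<Rightarrow> real) \<Rightarrow> (nat \<Rightarrow> 'v mtx set) \<Rightarrow> bool" where
  "finitely_open N D \<longleftrightarrow>
     (\<forall>n>0. \<forall>k v. (\<forall>l<k. v l \<in> mats n n) \<longrightarrow>
        (\<forall>p \<in> D n \<inter> fspan k v. \<exists>\<epsilon>>0. \<forall>x \<in> fspan k v. N n (mdiff x p) < \<epsilon> \<longrightarrow> x \<in> D n))"

definition nc_function ::
  "(nat \<Rightarrow> ('v::complex_normed_space) mtx set) \<Rightarrow> (nat \<Rightarrow> ('w::complex_normed_space) mtx set)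
   \<Rightarrow> (nat \<Rightarrow> 'v mtx \<Rightarrow> 'w mtx) \<Rightarrow> bool" where
  "nc_function D E f \<longleftrightarrow>
     (\<forall>n>0. \<forall>a\<in>D n. f n a \<in> E n) \<and>
     (\<forall>m n a b S. 0 < m \<longrightarrow> 0 < n \<longrightarrow> a \<in> D m \<longrightarrow> b \<in> D n \<longrightarrow> S \<in> mats m n \<longrightarrow>
        rmul m a S = lmul n S b \<longrightarrow> rmul m (f m a) S = lmul n S (f n b))"

definition locally_bounded ::
  "(nat \<Rightarrow> ('v::complex_normed_space) mtx \<Rightarrow> real) \<Rightarrow> (nat \<Rightarrow> ('w::complex_normed_space) mtx \<Rightarrow> real)
   \<Rightarrow> (nat \<Rightarrow> 'v mtx set) \<Rightarrow> (nat \<Rightarrow> 'v mtx \<Rightarrow> 'w mtx) \<Rightarrow> bool" where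
  "locally_bounded NV NW D f \<longleftrightarrow>
     (\<forall>n>0. \<forall>a\<in>D n. \<exists>r>0. \<exists>M. \<forall>x\<in>D n. NV n (mdiff x a) < r \<longrightarrow> NW n (f n x) \<le> M)"

definition Delta ::
  "(nat \<Rightarrow> ('v::complex_normed_space) mtx set) \<Rightarrow> (nat \<Rightarrow> 'v mtx \<Rightarrow> ('w::complex_normed_space) mtx)
   \<Rightarrow> nat \<Rightarrow> nat \<Rightarrow> 'v mtx \<Rightarrow> 'v mtx \<Rightarrow> 'v mtx \<Rightarrow> 'w mtx" where
  "Delta D f n m a c = (THE L.
      (\<forall>b. b \<notin> mats n m \<longrightarrow> L b = mzero) \<and>
      (\<forall>b\<in>mats n m. L b \<in> mats n m) \<and>
      (\<forall>b1\<in>mats n m. \<forall>b2\<in>mats n m. L (madd b1 b2) = madd (L b1) (L b2)) \<and>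
      (\<forall>z. \<forall>b\<in>mats n m. L (mscale z b) = mscale z (L b)) \<and>
      (\<forall>b\<in>mats n m. blk n a b c \<in> D (n + m) \<longrightarrow>
          f (n + m) (blk n a b c) = blk n (f n a) (L b) (f m c)))"

text \<open>delta_D(a,c)(b) = [sup{t \<in> [0,\<infinity>]. [a, sb; 0, c] \<in> D_{n+m} for all s \<in> [0,t]}]^{-1},
  with 1/0 = \<infinity>, 1/\<infinity> = 0 (as for inverse on ennreal).\<close>
definition delta :: "(nat \<Rightarrow> ('v::complex_normed_space) mtx set) \<Rightarrow> nat \<Rightarrow> nat
   \<Rightarrow> 'v mtx \<Rightarrow> 'v mtx \<Rightarrow> 'v mtx \<Rightarrow> ennreal" where
  "delta D n m a c b = inverse (Sup {t::ennreal. \<forall>s::real. 0 \<le> s \<and> ennreal s \<le> t \<longrightarrow>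
        blk n a (mscale (complex_of_real s) b) c \<in> D (n + m)})"

end

theory Submission
  imports Defs
begin

(* Intertwining [a x; 0 c] with scalar selection matrices forces
   f [a x; 0 c] = [f a, g x; 0, f c], and intertwining with diag(1, z), and with the embeddings of
   [a x_i; 0 c] and [a, x_1 + x_2; 0 c] into [a, x_1 x_2; 0, c (+) c], shows that the corner map g
   is homogeneous and additive wherever it is defined. Finite openness puts t b into the domain
   of g for all small t, so g is the germ of a unique linear map, which is therefore Delta f(a,c).
   Consequently f sends [a, s b; 0 c] in D to [f a, s Delta f(a,c)(b); 0, f c] in E: every radius
   admissible for delta_D is admissible for delta_E, and inverting the suprema gives the claim. *)

lemma scaleC_zero_right [simp]: "scaleC c (0::'a::complex_normed_space) = 0"
  by (metis add_cancel_right_right scaleC_add_right)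

lemma scaleC_zero_left [simp]: "scaleC 0 (x::'a::complex_normed_space) = 0"
  using scaleC_of_real[of 0 x] by simp

declare scaleC_one [simp]

lemma mats_zero_outside:
  assumes "x \<in> mats n m"
  shows "n \<le> i \<Longrightarrow> x i j = 0" and "m \<le> j \<Longrightarrow> x i j = 0"
  using assms unfolding mats_def by auto

lemma mscale_mats: "x \<in> mats n m \<Longrightarrow> mscale z x \<in> mats n m"
  by (simp add: mscale_def mats_def)

lemma madd_mats:
  fixes x y :: "('a::monoid_add) mtx"
  shows "x \<in> mats n m \<Longrightarrow> y \<in> mats n m \<Longrightarrow> madd x y \<in> mats n m"
  by (simp add: madd_def mats_def)

lemma mscale_mscale: "mscale u (mscale v x) = mscale (u * v) x"
  by (simp add: mscale_def scaleC_mult)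

lemma mscale_one [simp]: "mscale 1 x = x"
  by (simp add: mscale_def)

lemma mscale_madd: "mscale z (madd x y) = madd (mscale z x) (mscale z y)"
  by (simp add: mscale_def madd_def scaleC_add_right)

lemma mscale_commute: "mscale u (mscale v x) = mscale v (mscale u x)"
  by (simp add: mscale_mscale mult.commute)

lemma mscale_cancel: "z \<noteq> 0 \<Longrightarrow> mscale z x = mscale z y \<Longrightarrow> x = y"
  by (metis mscale_mscale mscale_one left_inverse)

definition mats_linear :: "nat \<Rightarrow> nat \<Rightarrow> (('v::complex_normed_space) mtx \<Rightarrow> ('w::complex_normed_space) mtx) \<Rightarrow> bool" where
  "mats_linear n m L \<longleftrightarrow>
     (\<forall>b. b \<notin> mats n m \<longrightarrow> L b = mzero) \<and>
     (\<forall>b\<in>mats n m. L b \<in> mats n m) \<and>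
     (\<forall>b1\<in>mats n m. \<forall>b2\<in>mats n m. L (madd b1 b2) = madd (L b1) (L b2)) \<and>
     (\<forall>z. \<forall>b\<in>mats n m. L (mscale z b) = mscale z (L b))"

lemma eventually_at_zero_ex_nonzero:
  assumes "\<forall>\<^sub>F t in at 0. P t"
  shows "\<exists>t::complex. t \<noteq> 0 \<and> P t"
  using eventually_happens'[OF at_neq_bot eventually_conj[OF eventually_neq_at_within assms]] .

context
  fixes n m :: nat and U :: "('v::complex_normed_space) mtx set"
    and g :: "'v mtx \<Rightarrow> ('w::complex_normed_space) mtx"
  assumes absorbing: "\<And>b. b \<in> mats n m \<Longrightarrow> \<forall>\<^sub>F t in at 0. mscale t b \<in> U"
begin

lemma linear_germ_unique:
  assumes "mats_linear n m L" "mats_linear n m L'" "\<forall>x\<in>U. L x = g x" "\<forall>x\<in>U. L' x = g x"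
  shows "L = L'"
proof
  fix b :: "'v mtx"
  show "L b = L' b"
  proof (cases "b \<in> mats n m")
    case False
    then show ?thesis using assms by (simp add: mats_linear_def)
  next
    case True
    then obtain t where "t \<noteq> 0" "mscale t b \<in> U"
      using eventually_at_zero_ex_nonzero absorbing by blast
    then have "mscale t (L b) = mscale t (L' b)"
      using assms True by (metis mats_linear_def)
    then show ?thesis
      using mscale_cancel \<open>t \<noteq> 0\<close> by blast
  qed
qed

lemma mats_linear_of_germ:
  assumes homogeneous: "\<And>x z. x \<in> U \<Longrightarrow> mscale z x \<in> U \<Longrightarrow> g (mscale z x) = mscale z (g x)"
    and additive: "\<And>b1 b2. b1 \<in> mats n m \<Longrightarrow> b2 \<in> mats n m \<Longrightarrow>
      \<forall>\<^sub>F t in at 0. g (madd (mscale t b1) (mscale t b2)) = madd (g (mscale t b1)) (g (mscale t b2))"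
    and L_outside: "\<And>b. b \<notin> mats n m \<Longrightarrow> L b = mzero"
    and L_mats: "\<And>b. b \<in> mats n m \<Longrightarrow> L b \<in> mats n m"
    and g_scaled: "\<And>b t. b \<in> mats n m \<Longrightarrow> mscale t b \<in> U \<Longrightarrow> g (mscale t b) = mscale t (L b)"
  shows "mats_linear n m L"
  unfolding mats_linear_def
proof (intro conjI ballI allI impI L_outside L_mats)
  fix z and b :: "'v mtx" assume b: "b \<in> mats n m"
  obtain t where t: "t \<noteq> 0" "mscale t (mscale z b) \<in> U" "mscale t b \<in> U"
    using eventually_at_zero_ex_nonzero[OF eventually_conj[OF absorbing[OF mscale_mats[OF b]] absorbing[OF b]]]
    by blast
  have tz: "mscale t (mscale z b) = mscale z (mscale t b)"
    by (rule mscale_commute)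
  have "mscale t (L (mscale z b)) = g (mscale z (mscale t b))"
    using g_scaled[OF mscale_mats[OF b] t(2)] tz by simp
  also have "\<dots> = mscale z (mscale t (L b))"
    using homogeneous[OF t(3)] t(2) g_scaled[OF b t(3)] tz by simp
  also have "\<dots> = mscale t (mscale z (L b))"
    by (rule mscale_commute)
  finally show "L (mscale z b) = mscale z (L b)"
    using mscale_cancel t(1) by blast
next
  fix b1 b2 :: "'v mtx" assume b1: "b1 \<in> mats n m" and b2: "b2 \<in> mats n m"
  have "\<forall>\<^sub>F t in at 0. mscale t b1 \<in> U \<and> mscale t b2 \<in> U \<and> mscale t (madd b1 b2) \<in> U \<and>
      g (madd (mscale t b1) (mscale t b2)) = madd (g (mscale t b1)) (g (mscale t b2))"
    using absorbing[OF b1] absorbing[OF b2] absorbing[OF madd_mats[OF b1 b2]] additive[OF b1 b2]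
    by eventually_elim blast
  then obtain t where t: "t \<noteq> 0" "mscale t b1 \<in> U" "mscale t b2 \<in> U" "mscale t (madd b1 b2) \<in> U"
      "g (madd (mscale t b1) (mscale t b2)) = madd (g (mscale t b1)) (g (mscale t b2))"
    using eventually_at_zero_ex_nonzero by blast
  have "mscale t (L (madd b1 b2)) = g (madd (mscale t b1) (mscale t b2))"
    using g_scaled[OF madd_mats[OF b1 b2] t(4)] by (simp add: mscale_madd)
  also have "\<dots> = mscale t (madd (L b1) (L b2))"
    using t(5) g_scaled[OF b1 t(2)] g_scaled[OF b2 t(3)] by (simp add: mscale_madd)
  finally show "L (madd b1 b2) = madd (L b1) (L b2)"
    using mscale_cancel t(1) by blast
qed

lemma unique_linear_extension_of_germ:
  assumes U_mats: "U \<subseteq> mats n m"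
    and g_mats: "\<And>x. g x \<in> mats n m"
    and homogeneous: "\<And>x z. x \<in> U \<Longrightarrow> mscale z x \<in> U \<Longrightarrow> g (mscale z x) = mscale z (g x)"
    and additive: "\<And>b1 b2. b1 \<in> mats n m \<Longrightarrow> b2 \<in> mats n m \<Longrightarrow>
      \<forall>\<^sub>F t in at 0. g (madd (mscale t b1) (mscale t b2)) = madd (g (mscale t b1)) (g (mscale t b2))"
  shows "\<exists>!L. mats_linear n m L \<and> (\<forall>x\<in>U. L x = g x)"
proof -
  obtain \<tau> where \<tau>: "\<And>b. b \<in> mats n m \<Longrightarrow> \<tau> b \<noteq> 0 \<and> mscale (\<tau> b) b \<in> U"
    using eventually_at_zero_ex_nonzero[OF absorbing] by metis
  define L where "L b = (if b \<in> mats n m then mscale (inverse (\<tau> b)) (g (mscale (\<tau> b) b)) else mzero)" for b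
  have g_scaled: "g (mscale t b) = mscale t (L b)" if b: "b \<in> mats n m" and tb: "mscale t b \<in> U" for b t
  proof -
    have "mscale t b = mscale (t / \<tau> b) (mscale (\<tau> b) b)"
      using \<tau>[OF b] by (simp add: mscale_mscale)
    then have "g (mscale t b) = mscale (t / \<tau> b) (g (mscale (\<tau> b) b))"
      using homogeneous \<tau>[OF b] tb by metis
    then show ?thesis
      using b by (simp add: L_def mscale_mscale divide_inverse)
  qed
  have "mats_linear n m L"
    by (rule mats_linear_of_germ[OF homogeneous additive _ _ g_scaled])
      (simp_all add: L_def g_mats mscale_mats)
  moreover have "\<forall>x\<in>U. L x = g x"
    using g_scaled[of _ 1] U_mats by auto
  ultimately show ?thesis
    using linear_germ_unique by blast
qed

end

lemma rmul_column_selector: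
  assumes "\<And>l j. S l j = (if l = \<sigma> j then w j else 0)"
  shows "rmul k x S = (\<lambda>i j. if \<sigma> j < k then scaleC (w j) (x i (\<sigma> j)) else 0)"
  unfolding rmul_def assms by (intro ext) (simp add: if_distrib[of "\<lambda>u. scaleC u _"] cong: if_cong)

lemma lmul_row_selector:
  assumes "\<And>i l. S i l = (if l = \<rho> i then u i else 0)"
  shows "lmul k S y = (\<lambda>i j. if \<rho> i < k then scaleC (u i) (y (\<rho> i) j) else 0)"
  unfolding lmul_def assms by (intro ext) (simp add: if_distrib[of "\<lambda>u. scaleC u _"] cong: if_cong)

lemma rmul_add_right:
  assumes "\<And>l j. S l j = T l j + T' l j"
  shows "rmul k x S = (\<lambda>i j. rmul k x T i j + rmul k x T' i j)"
  unfolding rmul_def assms by (simp add: scaleC_add_left sum.distrib)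

definition ur_corner :: "nat \<Rightarrow> nat \<Rightarrow> ('w::zero) mtx \<Rightarrow> 'w mtx" where
  "ur_corner n m F = (\<lambda>i j. if i < n \<and> j < m then F i (j + n) else 0)"

lemma ur_corner_mats: "ur_corner n m F \<in> mats n m"
  unfolding ur_corner_def mats_def by auto

lemma ur_corner_blk: "B \<in> mats n m \<Longrightarrow> ur_corner n m (blk n A B C) = B"
  unfolding ur_corner_def blk_def by (auto simp: fun_eq_iff mats_zero_outside)

definition hcat :: "nat \<Rightarrow> ('u::zero) mtx \<Rightarrow> 'u mtx \<Rightarrow> 'u mtx" where
  "hcat m x1 x2 = (\<lambda>i j. if j < m then x1 i j else x2 i (j - m))"

lemma nc_set_mats: "nc_set D \<Longrightarrow> 0 < k \<Longrightarrow> x \<in> D k \<Longrightarrow> x \<in> mats k k"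
  unfolding nc_set_def by auto

lemma nc_set_dsum: "nc_set D \<Longrightarrow> 0 < n \<Longrightarrow> 0 < m \<Longrightarrow> a \<in> D n \<Longrightarrow> c \<in> D m \<Longrightarrow> dsum n a c \<in> D (n + m)"
  unfolding nc_set_def by blast

context
  fixes D :: "nat \<Rightarrow> ('v::complex_normed_space) mtx set"
    and E :: "nat \<Rightarrow> ('w::complex_normed_space) mtx set"
    and f :: "nat \<Rightarrow> 'v mtx \<Rightarrow> 'w mtx"
  assumes ncD: "nc_set D" and ncE: "nc_set E" and ncf: "nc_function D E f"
begin

lemma nc_function_in: "0 < k \<Longrightarrow> x \<in> D k \<Longrightarrow> f k x \<in> E k"
  using ncf unfolding nc_function_def by auto

lemma nc_function_mats: "0 < k \<Longrightarrow> x \<in> D k \<Longrightarrow> f k x \<in> mats k k"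
  using ncE nc_function_in unfolding nc_set_def by blast

lemma nc_function_intertwines:
  "0 < p \<Longrightarrow> 0 < q \<Longrightarrow> A \<in> D p \<Longrightarrow> B \<in> D q \<Longrightarrow> S \<in> mats p q \<Longrightarrow>
   rmul p A S = lmul q S B \<Longrightarrow> rmul p (f p A) S = lmul q S (f q B)"
  using ncf unfolding nc_function_def by blast

lemma nc_function_blk:
  assumes n: "0 < n" and m: "0 < m" and a: "a \<in> D n" and c: "c \<in> D m"
    and X: "blk n a x c \<in> D (n + m)"
  shows "f (n + m) (blk n a x c) = blk n (f n a) (ur_corner n m (f (n + m) (blk n a x c))) (f m c)"
proof -
  define F where "F = f (n + m) (blk n a x c)"
  have "F \<in> mats (n + m) (n + m)"
    unfolding F_def using nc_function_mats X n by simp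
  note zero = mats_zero_outside[OF this] mats_zero_outside[OF nc_set_mats[OF ncD n a]]
    mats_zero_outside[OF nc_set_mats[OF ncD m c]] mats_zero_outside[OF nc_function_mats[OF m c]]
  \<comment> \<open>S1 = [I; 0] and S2 = [0 I] intertwine [a x; 0 c] with a and with c.\<close>
  define S1 :: "complex mtx" where "S1 l j = (if l = j then if j < n then 1 else 0 else 0)" for l j
  define S2 :: "complex mtx" where "S2 l j = (if j = l + n then if l < m then 1 else 0 else 0)" for l j
  have S1c: "S1 l j = (if l = j then if j < n then 1 else 0 else 0)"
   and S1r: "S1 l j = (if j = l then if l < n then 1 else 0 else 0)"
   and S2c: "S2 l j = (if l = j - n then if n \<le> j \<and> j < n + m then 1 else 0 else 0)"
   and S2r: "S2 l j = (if j = l + n then if l < m then 1 else 0 else 0)" for l j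
    by (auto simp: S1_def S2_def)
  note sel = rmul_column_selector[OF S1c] rmul_column_selector[OF S2c]
    lmul_row_selector[OF S1r] lmul_row_selector[OF S2r]
  have "S1 \<in> mats (n + m) n" "S2 \<in> mats m (n + m)"
    by (auto simp: mats_def S1_def S2_def)
  moreover have "rmul (n + m) (blk n a x c) S1 = lmul n S1 a"
    and "rmul m c S2 = lmul (n + m) S2 (blk n a x c)"
    unfolding sel by (auto simp: fun_eq_iff blk_def zero)
  ultimately have r1: "rmul (n + m) F S1 = lmul n S1 (f n a)"
    and r2: "rmul m (f m c) S2 = lmul (n + m) S2 F"
    unfolding F_def using nc_function_intertwines n m a c X by auto
  have left: "F i j = (if i < n then f n a i j else 0)" if "j < n" for i j
    using that fun_cong[OF fun_cong[OF r1, of i], of j] by (simp add: sel)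
  have lower: "F (i + n) j = (if n \<le> j then f m c i (j - n) else 0)" if "i < m" for i j
    using that fun_cong[OF fun_cong[OF r2, of i], of j]
    by (cases "j < n + m") (auto simp: sel zero less_diff_conv2)
  have "F i j = blk n (f n a) (ur_corner n m F) (f m c) i j" for i j
  proof (cases "i < n + m")
    case True
    then show ?thesis
      using left lower[of "i - n"] unfolding blk_def ur_corner_def
      by (auto simp: zero less_diff_conv2)
  next
    case False
    then show ?thesis
      unfolding blk_def ur_corner_def by (auto simp: zero)
  qed
  then show ?thesis
    unfolding F_def by blast
qed

lemma nc_function_blk_iff_corner:
  assumes n: "0 < n" and m: "0 < m" and a: "a \<in> D n" and c: "c \<in> D m"
    and L_mats: "\<forall>b\<in>mats n m. L b \<in> mats n m"
  shows "(\<forall>b\<in>mats n m. blk n a b c \<in> D (n + m) \<longrightarrow>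
       f (n + m) (blk n a b c) = blk n (f n a) (L b) (f m c)) \<longleftrightarrow>
    (\<forall>b\<in>mats n m. blk n a b c \<in> D (n + m) \<longrightarrow> L b = ur_corner n m (f (n + m) (blk n a b c)))"
  using nc_function_blk[OF n m a c] L_mats ur_corner_blk by metis

lemma nc_function_corner_homogeneous:
  assumes n: "0 < n" and m: "0 < m" and a: "a \<in> D n" and c: "c \<in> D m"
    and x: "x \<in> mats n m" and X: "blk n a x c \<in> D (n + m)"
    and Y: "blk n a (mscale z x) c \<in> D (n + m)"
  shows "ur_corner n m (f (n + m) (blk n a (mscale z x) c)) =
    mscale z (ur_corner n m (f (n + m) (blk n a x c)))"
proof -
  note zero = mats_zero_outside[OF nc_set_mats[OF ncD n a]] mats_zero_outside[OF nc_set_mats[OF ncD m c]]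
    mats_zero_outside[OF x]
  \<comment> \<open>S = diag(1, z): [a x; 0 c] S = S [a, z x; 0 c].\<close>
  define S :: "complex mtx"
    where "S l j = (if l = j then if j < n then 1 else if j < n + m then z else 0 else 0)" for l j
  have Sc: "S l j = (if l = j then if j < n then 1 else if j < n + m then z else 0 else 0)"
   and Sr: "S l j = (if j = l then if l < n then 1 else if l < n + m then z else 0 else 0)" for l j
    by (auto simp: S_def)
  note sel = rmul_column_selector[OF Sc] lmul_row_selector[OF Sr]
  have "S \<in> mats (n + m) (n + m)"
    by (auto simp: mats_def S_def)
  moreover have "rmul (n + m) (blk n a x c) S = lmul (n + m) S (blk n a (mscale z x) c)"
    unfolding sel by (auto simp: fun_eq_iff blk_def mscale_def zero)
  ultimately have "rmul (n + m) (f (n + m) (blk n a x c)) S =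
      lmul (n + m) S (f (n + m) (blk n a (mscale z x) c))"
    using nc_function_intertwines n X Y by auto
  note intertwined = this
  have "f (n + m) (blk n a (mscale z x) c) i (j + n) = scaleC z (f (n + m) (blk n a x c) i (j + n))"
    if "i < n" "j < m" for i j
  proof -
    have "rmul (n + m) (f (n + m) (blk n a x c)) S i (j + n) =
        lmul (n + m) S (f (n + m) (blk n a (mscale z x) c)) i (j + n)"
      using intertwined by simp
    then show ?thesis
      using that by (simp add: sel)
  qed
  then show ?thesis
    unfolding ur_corner_def mscale_def by (auto simp: fun_eq_iff)
qed

lemma nc_function_hcat_corners:
  assumes n: "0 < n" and m: "0 < m" and a: "a \<in> D n" and c: "c \<in> D m"
    and x1: "x1 \<in> mats n m" and x2: "x2 \<in> mats n m"
    and X: "blk n a (hcat m x1 x2) (dsum m c c) \<in> D (n + (m + m))"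
    and Y1: "blk n a x1 c \<in> D (n + m)" and Y2: "blk n a x2 c \<in> D (n + m)"
    and ij: "i < n" "j < m"
  shows "f (n + (m + m)) (blk n a (hcat m x1 x2) (dsum m c c)) i (j + n) =
      f (n + m) (blk n a x1 c) i (j + n)"
    and "f (n + (m + m)) (blk n a (hcat m x1 x2) (dsum m c c)) i (j + n + m) =
      f (n + m) (blk n a x2 c) i (j + n)"
proof -
  note zero = mats_zero_outside[OF nc_set_mats[OF ncD n a]] mats_zero_outside[OF nc_set_mats[OF ncD m c]]
    mats_zero_outside[OF x1] mats_zero_outside[OF x2]
  define K where "K = n + (m + m)"
  \<comment> \<open>T1, T2 embed C^(n+m) onto the coordinates 0..<n+m, resp. 0..<n and n+m..<n+2m,
    of C^(n+2m); they intertwine the big block matrix with [a x1; 0 c], resp. [a x2; 0 c].\<close>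
  define T1 :: "complex mtx" where "T1 l j = (if l = j then if j < n + m then 1 else 0 else 0)" for l j
  define T2 :: "complex mtx"
    where "T2 l j = (if l = (if j < n then j else j + m) then if j < n + m then 1 else 0 else 0)" for l j
  have T1c: "T1 l j = (if l = j then if j < n + m then 1 else 0 else 0)"
   and T1r: "T1 l j = (if j = l then if l < n + m then 1 else 0 else 0)"
   and T2c: "T2 l j = (if l = (if j < n then j else j + m) then if j < n + m then 1 else 0 else 0)"
   and T2r: "T2 l j = (if j = (if l < n then l else l - m) then if l < n \<or> n + m \<le> l \<and> l < K then 1 else 0 else 0)"
    for l j
    by (auto simp: T1_def T2_def K_def)
  note sel = rmul_column_selector[OF T1c] rmul_column_selector[OF T2c]
    lmul_row_selector[OF T1r] lmul_row_selector[OF T2r]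
  have "T1 \<in> mats K (n + m)" "T2 \<in> mats K (n + m)"
    by (auto simp: mats_def T1_def T2_def K_def)
  moreover have "rmul K (blk n a (hcat m x1 x2) (dsum m c c)) T1 = lmul (n + m) T1 (blk n a x1 c)"
    and "rmul K (blk n a (hcat m x1 x2) (dsum m c c)) T2 = lmul (n + m) T2 (blk n a x2 c)"
    unfolding sel K_def by (auto simp: fun_eq_iff blk_def dsum_def hcat_def mzero_def zero ac_simps)
  moreover define G where "G = f K (blk n a (hcat m x1 x2) (dsum m c c))"
  ultimately have "rmul K G T1 = lmul (n + m) T1 (f (n + m) (blk n a x1 c))"
    and "rmul K G T2 = lmul (n + m) T2 (f (n + m) (blk n a x2 c))"
    using nc_function_intertwines[of K "n + m"] n X Y1 Y2 unfolding K_def by auto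
  then have "rmul K G T1 i (j + n) = lmul (n + m) T1 (f (n + m) (blk n a x1 c)) i (j + n)"
    and "rmul K G T2 i (j + n) = lmul (n + m) T2 (f (n + m) (blk n a x2 c)) i (j + n)"
    by simp_all
  then show "G i (j + n) = f (n + m) (blk n a x1 c) i (j + n)"
    and "G i (j + n + m) = f (n + m) (blk n a x2 c) i (j + n)"
    using ij unfolding sel K_def by auto
qed

lemma nc_function_corner_additive:
  assumes n: "0 < n" and m: "0 < m" and a: "a \<in> D n" and c: "c \<in> D m"
    and x1: "x1 \<in> mats n m" and x2: "x2 \<in> mats n m"
    and X: "blk n a (hcat m x1 x2) (dsum m c c) \<in> D (n + (m + m))"
    and Y1: "blk n a x1 c \<in> D (n + m)" and Y2: "blk n a x2 c \<in> D (n + m)"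
    and Y: "blk n a (madd x1 x2) c \<in> D (n + m)"
  shows "ur_corner n m (f (n + m) (blk n a (madd x1 x2) c)) =
    madd (ur_corner n m (f (n + m) (blk n a x1 c))) (ur_corner n m (f (n + m) (blk n a x2 c)))"
proof -
  note zero = mats_zero_outside[OF nc_set_mats[OF ncD n a]] mats_zero_outside[OF nc_set_mats[OF ncD m c]]
    mats_zero_outside[OF x1] mats_zero_outside[OF x2]
  define K where "K = n + (m + m)"
  define T1 :: "complex mtx" where "T1 l j = (if l = j then if j < n + m then 1 else 0 else 0)" for l j
  define T3 :: "complex mtx" where "T3 l j = (if l = j + m then if n \<le> j \<and> j < n + m then 1 else 0 else 0)" for l j
  \<comment> \<open>S = [I 0; 0 I; 0 I] merges the two copies of c, so that the block matrix
    intertwines with [a, x1 + x2; 0 c].\<close>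
  define S :: "complex mtx" where "S l j = T1 l j + T3 l j" for l j
  have T1c: "T1 l j = (if l = j then if j < n + m then 1 else 0 else 0)"
   and T3c: "T3 l j = (if l = j + m then if n \<le> j \<and> j < n + m then 1 else 0 else 0)"
   and Sr: "S l j = (if j = (if l < n + m then l else l - m) then if l < K then 1 else 0 else 0)" for l j
    by (auto simp: T1_def T3_def S_def K_def)
  have S_sum: "rmul K G S = (\<lambda>i j. rmul K G T1 i j + rmul K G T3 i j)" for G :: "'u::complex_normed_space mtx"
    by (rule rmul_add_right) (simp add: S_def)
  note sel = S_sum rmul_column_selector[OF T1c] rmul_column_selector[OF T3c] lmul_row_selector[OF Sr]
  have "S \<in> mats K (n + m)"
    by (auto simp: mats_def S_def T1_def T3_def K_def)
  moreover have "rmul K (blk n a (hcat m x1 x2) (dsum m c c)) S = lmul (n + m) S (blk n a (madd x1 x2) c)"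
    unfolding sel unfolding K_def by (auto simp: fun_eq_iff blk_def dsum_def hcat_def mzero_def madd_def zero ac_simps)
  moreover define G where "G = f K (blk n a (hcat m x1 x2) (dsum m c c))"
  ultimately have "rmul K G S = lmul (n + m) S (f (n + m) (blk n a (madd x1 x2) c))"
    using nc_function_intertwines[of K "n + m"] n X Y unfolding K_def by auto
  note intertwined = this
  have "G i (j + n) + G i (j + n + m) = f (n + m) (blk n a (madd x1 x2) c) i (j + n)"
    if "i < n" "j < m" for i j
  proof -
    have "rmul K G S i (j + n) = lmul (n + m) S (f (n + m) (blk n a (madd x1 x2) c)) i (j + n)"
      using intertwined by simp
    then show ?thesis
      using that unfolding sel unfolding K_def by simp
  qed
  then show ?thesis
    using nc_function_hcat_corners[OF n m a c x1 x2 X Y1 Y2]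
    unfolding G_def K_def ur_corner_def madd_def by (auto simp: fun_eq_iff)
qed

end

lemma finitely_open_line:
  fixes N :: "nat \<Rightarrow> ('v::complex_normed_space) mtx \<Rightarrow> real"
  assumes op: "opspace N" and fo: "finitely_open N D" and k: "0 < k"
    and p: "p \<in> D k" "p \<in> mats k k" and v: "v \<in> mats k k"
  shows "\<forall>\<^sub>F t in at 0. madd p (mscale t v) \<in> D k"
proof -
  define V where "V l = (if l = 0 then p else v)" for l :: nat
  have line_span: "madd p (mscale t v) \<in> fspan 2 V" for t
    unfolding fspan_def
    by (rule CollectI, rule exI[of _ "\<lambda>l. if l = 0 then 1 else t"])
       (auto simp: V_def madd_def mscale_def numeral_2_eq_2 fun_eq_iff)
  moreover have "p = madd p (mscale 0 v)"
    by (auto simp: madd_def mscale_def fun_eq_iff)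
  ultimately have "p \<in> D k \<inter> fspan 2 V"
    using p by (metis IntI)
  moreover have "\<forall>l<2. V l \<in> mats k k"
    using p v by (simp add: V_def)
  ultimately obtain \<epsilon> where "\<epsilon> > 0" and \<epsilon>: "\<And>x. x \<in> fspan 2 V \<Longrightarrow> N k (mdiff x p) < \<epsilon> \<Longrightarrow> x \<in> D k"
    using fo k unfolding finitely_open_def by meson
  have Nv: "0 \<le> N k v" and N_scale: "N k (mscale t v) = cmod t * N k v" for t
    using op k v unfolding opspace_def by auto
  show ?thesis
    unfolding eventually_at
  proof (intro exI[of _ "\<epsilon> / (N k v + 1)"] conjI ballI impI)
    show "0 < \<epsilon> / (N k v + 1)"
      using \<open>\<epsilon> > 0\<close> Nv by simp
    fix t :: complex
    assume "t \<noteq> 0 \<and> dist t 0 < \<epsilon> / (N k v + 1)"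
    have "mdiff (madd p (mscale t v)) p = mscale t v"
      by (auto simp: madd_def mdiff_def fun_eq_iff)
    then have "N k (mdiff (madd p (mscale t v)) p) = cmod t * N k v"
      using N_scale by simp
    also have "\<dots> \<le> cmod t * (N k v + 1)"
      by (simp add: mult_left_mono)
    also have "\<dots> < \<epsilon>"
      using \<open>t \<noteq> 0 \<and> dist t 0 < \<epsilon> / (N k v + 1)\<close> Nv by (simp add: pos_less_divide_eq)
    finally have "N k (mdiff (madd p (mscale t v)) p) < \<epsilon>" .
    then show "madd p (mscale t v) \<in> D k"
      using \<epsilon> line_span by blast
  qed
qed

lemma eventually_blk_in:
  fixes N :: "nat \<Rightarrow> ('v::complex_normed_space) mtx \<Rightarrow> real"
  assumes ncD: "nc_set D" and op: "opspace N" and fo: "finitely_open N D"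
    and n: "0 < n" and m: "0 < m" and a: "a \<in> D n" and c: "c \<in> D m" and b: "b \<in> mats n m"
  shows "\<forall>\<^sub>F t in at 0. blk n a (mscale t b) c \<in> D (n + m)"
proof -
  have ac: "dsum n a c \<in> D (n + m)"
    using nc_set_dsum[OF ncD n m a c] .
  have "blk n mzero b mzero \<in> mats (n + m) (n + m)"
    using b unfolding mats_def blk_def mzero_def by auto
  moreover have "blk n a (mscale t b) c = madd (dsum n a c) (mscale t (blk n mzero b mzero))" for t
    unfolding blk_def dsum_def madd_def mscale_def mzero_def by (intro ext) simp
  ultimately show ?thesis
    using finitely_open_line[OF op fo _ ac nc_set_mats[OF ncD _ ac]] n by simp
qed

lemma eventually_blk_hcat_in:
  fixes N :: "nat \<Rightarrow> ('v::complex_normed_space) mtx \<Rightarrow> real"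
  assumes ncD: "nc_set D" and op: "opspace N" and fo: "finitely_open N D"
    and n: "0 < n" and m: "0 < m" and a: "a \<in> D n" and c: "c \<in> D m"
    and b1: "b1 \<in> mats n m" and b2: "b2 \<in> mats n m"
  shows "\<forall>\<^sub>F t in at 0. blk n a (hcat m (mscale t b1) (mscale t b2)) (dsum m c c) \<in> D (n + (m + m))"
proof -
  have acc: "dsum n a (dsum m c c) \<in> D (n + (m + m))"
    using nc_set_dsum[OF ncD n _ a nc_set_dsum[OF ncD m m c c]] m by simp
  have "blk n mzero (hcat m b1 b2) mzero \<in> mats (n + (m + m)) (n + (m + m))"
    using b1 b2 unfolding mats_def blk_def mzero_def hcat_def by auto
  moreover have "blk n a (hcat m (mscale t b1) (mscale t b2)) (dsum m c c) =
      madd (dsum n a (dsum m c c)) (mscale t (blk n mzero (hcat m b1 b2) mzero))" for t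
    unfolding blk_def dsum_def madd_def mscale_def mzero_def hcat_def by (intro ext) simp
  ultimately show ?thesis
    using finitely_open_line[OF op fo _ acc nc_set_mats[OF ncD _ acc]] n by simp
qed

lemma Delta_spec:
  fixes N :: "nat \<Rightarrow> ('v::complex_normed_space) mtx \<Rightarrow> real"
    and f :: "nat \<Rightarrow> 'v mtx \<Rightarrow> ('w::complex_normed_space) mtx"
  assumes ncD: "nc_set D" and ncE: "nc_set E" and ncf: "nc_function D E f"
    and op: "opspace N" and fo: "finitely_open N D"
    and n: "0 < n" and m: "0 < m" and a: "a \<in> D n" and c: "c \<in> D m"
  shows "mats_linear n m (Delta D f n m a c) \<and>
    (\<forall>b\<in>mats n m. blk n a b c \<in> D (n + m) \<longrightarrow>
       f (n + m) (blk n a b c) = blk n (f n a) (Delta D f n m a c b) (f m c))"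
proof -
  define U where "U = {x \<in> mats n m. blk n a x c \<in> D (n + m)}"
  define g where "g x = ur_corner n m (f (n + m) (blk n a x c))" for x
  note blk_in = eventually_blk_in[OF ncD op fo n m a c]
  have "\<exists>!L. mats_linear n m L \<and> (\<forall>x\<in>U. L x = g x)"
  proof (rule unique_linear_extension_of_germ)
    show "U \<subseteq> mats n m" "\<And>x. g x \<in> mats n m"
      by (auto simp: U_def g_def ur_corner_mats)
    show "\<forall>\<^sub>F t in at 0. mscale t b \<in> U" if "b \<in> mats n m" for b
      using blk_in[OF that] by eventually_elim (simp add: U_def mscale_mats that)
    show "g (mscale z x) = mscale z (g x)" if "x \<in> U" "mscale z x \<in> U" for x z
      using that nc_function_corner_homogeneous[OF ncD ncE ncf n m a c] by (simp add: U_def g_def)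
    show "\<forall>\<^sub>F t in at 0. g (madd (mscale t b1) (mscale t b2)) = madd (g (mscale t b1)) (g (mscale t b2))"
      if b1: "b1 \<in> mats n m" and b2: "b2 \<in> mats n m" for b1 b2
      using blk_in[OF b1] blk_in[OF b2] blk_in[OF madd_mats[OF b1 b2]]
        eventually_blk_hcat_in[OF ncD op fo n m a c b1 b2]
      by eventually_elim
        (simp add: g_def mscale_madd nc_function_corner_additive[OF ncD ncE ncf n m a c] mscale_mats b1 b2)
  qed
  moreover have "(\<forall>b\<in>mats n m. blk n a b c \<in> D (n + m) \<longrightarrow>
       f (n + m) (blk n a b c) = blk n (f n a) (L b) (f m c)) \<longleftrightarrow> (\<forall>x\<in>U. L x = g x)"
    if "mats_linear n m L" for L
    using nc_function_blk_iff_corner[OF ncD ncE ncf n m a c] that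
    unfolding U_def g_def mats_linear_def by blast
  ultimately have "\<exists>!L. mats_linear n m L \<and> (\<forall>b\<in>mats n m. blk n a b c \<in> D (n + m) \<longrightarrow>
       f (n + m) (blk n a b c) = blk n (f n a) (L b) (f m c))"
    by (simp cong: conj_cong)
  from theI'[OF this] show ?thesis
    unfolding Delta_def mats_linear_def conj_assoc .
qed

lemma ennreal_inverse_antimono: "(x::ennreal) \<le> y \<Longrightarrow> inverse y \<le> inverse x"
  including ennreal.lifting
  by transfer (auto intro: ereal_inverse_antimono)

theorem corollary3p2:
  fixes NV :: "nat \<Rightarrow> ('v::complex_normed_space) mtx \<Rightarrow> real"
    and NW :: "nat \<Rightarrow> ('w::complex_normed_space) mtx \<Rightarrow> real"
    and D :: "nat \<Rightarrow> 'v mtx set" and E :: "nat \<Rightarrow> 'w mtx set"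
    and f :: "nat \<Rightarrow> 'v mtx \<Rightarrow> 'w mtx"
  assumes "opspace NV" and "opspace NW"
    and "nc_set D" and "finitely_open NV D" and "nc_set E"
    and "nc_function D E f" and "locally_bounded NV NW D f"
    and "0 < n" and "0 < m" and "a \<in> D n" and "c \<in> D m" and "b \<in> mats n m"
  shows "delta E n m (f n a) (f m c) (Delta D f n m a c b) \<le> delta D n m a c b"
proof -
  note Delta = Delta_spec[OF assms(3,5,6,1,4,8-11)]
  have "blk n (f n a) (mscale s (Delta D f n m a c b)) (f m c) \<in> E (n + m)"
    if "blk n a (mscale s b) c \<in> D (n + m)" for s
  proof -
    have "f (n + m) (blk n a (mscale s b) c) \<in> E (n + m)"
      using nc_function_in[OF assms(3,5,6)] that assms(8) by simp
    moreover have "f (n + m) (blk n a (mscale s b) c) = blk n (f n a) (mscale s (Delta D f n m a c b)) (f m c)"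
      using Delta that mscale_mats[OF assms(12)] assms(12) unfolding mats_linear_def by simp
    ultimately show ?thesis by simp
  qed
  then show ?thesis
    unfolding delta_def by (intro ennreal_inverse_antimono Sup_subset_mono) auto
qed

end
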